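(* Let $\Phi(\xi;t_5,t_2,x)=\big[\mathbb I+\sum_{k\ge1}\Phi_k\xi^{-k}\big]e^{\Theta(\xi;t_5,t_2,x)}$ be a formal solution at $\xi=\infty$ of $\partial_\xi\Phi=\mathcal L(\xi;t_5,t_2,x)\Phi$. Then $\Phi(\xi;t_5,t_2,x)=\mathcal S^T\Phi(\omega\xi;t_5,t_2,x)\mathcal S$, and the coefficients satisfy $\Phi_k=\omega^{-k}\mathcal S^T\Phi_k\mathcal S$ for all $k$.
   Context: $\omega=e^{2\pi i/3}$, $\mathcal S=\begin{pmatrix}0&1&0\\0&0&1\\1&0&0\end{pmatrix}$. $\Theta=\mathrm{diag}(\vartheta_1,\vartheta_2,\vartheta_3)$ with $\vartheta_j(\xi)=\frac37\omega^{j-1}\xi^7+\omega^{1-j}t_5\xi^5+\omega^{1-j}t_2\xi^2+\omega^{j-1}x\xi$. $\mathcal L(\xi):=3\xi^2g(\xi)^{-1}L(\xi^3)g(\xi)-g(\xi)^{-1}g'(\xi)$ with $g(\xi)=\frac i{\sqrt3}\mathrm{diag}(\xi,1,\xi^{-1})\begin{pmatrix}1&\omega&\omega^2\\1&1&1\\1&\omega^2&\omega\end{pmatrix}$ and $L(\lambda)=E_{13}\lambda^2+\begin{pmatrix}0&2t_5+\frac14Q_U&-Q_V\\1&0&2t_5+\frac14Q_U\\0&1&0\end{pmatrix}\lambda+L_0$ ($E_{ij}$ matrix units, $Q_a,P_a$ parameters), $L_0$ with rows $(\tfrac18Q_U^2-P_W+\tfrac12P_V-\tfrac14t_5Q_U-\tfrac16t_5^2,L_{12},L_{13})$,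 $(\tfrac12Q_V-\tfrac14Q_W,2P_W-\tfrac14Q_U^2+\tfrac12t_5Q_U+\tfrac13t_5^2,L_{23})$, $(t_5-\tfrac12Q_U,\tfrac12Q_V+\tfrac14Q_W,\tfrac18Q_U^2-P_W-\tfrac12P_V-\tfrac14t_5Q_U-\tfrac16t_5^2)$, $L_{12}=\tfrac5{16}Q_UQ_W-P_U+\tfrac14t_5Q_W-\tfrac38Q_UQ_V-\tfrac12t_5Q_V+t_2$, $L_{13}=\tfrac1{16}Q_W^2+\tfrac7{32}Q_U^3+\tfrac34Q_V^2-\tfrac32P_WQ_U+\tfrac5{16}t_5Q_U^2-2t_5P_W+\tfrac14t_5^2Q_U+x+\tfrac8{27}t_5^3$, $L_{23}=-\tfrac5{16}Q_UQ_W+P_U-\tfrac14t_5Q_W-\tfrac38Q_UQ_V-\tfrac12t_5Q_V+t_2$. *)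

theory Defs
  imports "HOL-Analysis.Analysis" "HOL-Computational_Algebra.Formal_Laurent_Series"
begin

text \<open>Formal Laurent series in the variable z = 1/xi (fls_X = z, fls_X_inv = xi).
  A formal series I + sum_k Phi_k xi^(-k) is a power series in z.\<close>

definition omega :: complex where "omega = exp (2 * of_real pi * \<i> / 3)"

definition Smat :: "complex^3^3" where
  "Smat = vector [vector [0,1,0], vector [0,0,1], vector [1,0,0]]"

definition diag3 :: "'a::zero \<Rightarrow> 'a \<Rightarrow> 'a \<Rightarrow> 'a^3^3" where
  "diag3 a b c = vector [vector [a,0,0], vector [0,b,0], vector [0,0,c]]"

definition xi :: "complex fls" where "xi = fls_X_inv"

text \<open>d/dxi on Laurent series in z = 1/xi: d/dxi = - z^2 d/dz\<close>
definition dxi :: "complex fls \<Rightarrow> complex fls" where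
  "dxi f = - (fls_X ^ 2 * fls_deriv f)"

definition mdxi :: "complex fls^3^3 \<Rightarrow> complex fls^3^3" where
  "mdxi A = (\<chi> i j. dxi (A $ i $ j))"

definition cmat :: "complex^3^3 \<Rightarrow> complex fls^3^3" where
  "cmat A = (\<chi> i j. fls_const (A $ i $ j))"

definition sm :: "complex fls \<Rightarrow> complex fls^3^3 \<Rightarrow> complex fls^3^3" where
  "sm s A = (\<chi> i j. s * A $ i $ j)"

definition E13 :: "complex^3^3" where
  "E13 = vector [vector [0,0,1], vector [0,0,0], vector [0,0,0]]"

definition L1 :: "complex \<Rightarrow> complex \<Rightarrow> complex \<Rightarrow> complex^3^3" where
  "L1 t5 QU QV = vector [vector [0, 2*t5 + QU/4, - QV],
                         vector [1, 0, 2*t5 + QU/4],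
                         vector [0, 1, 0]]"

definition L0 :: "complex \<Rightarrow> complex \<Rightarrow> complex \<Rightarrow> complex \<Rightarrow> complex \<Rightarrow> complex \<Rightarrow> complex
    \<Rightarrow> complex \<Rightarrow> complex \<Rightarrow> complex^3^3" where
  "L0 t5 t2 x QU QV QW PU PV PW =
    (let L12 = 5/16*QU*QW - PU + 1/4*t5*QW - 3/8*QU*QV - 1/2*t5*QV + t2;
         L13 = 1/16*QW^2 + 7/32*QU^3 + 3/4*QV^2 - 3/2*PW*QU + 5/16*t5*QU^2 - 2*t5*PW
               + 1/4*t5^2*QU + x + 8/27*t5^3;
         L23 = -5/16*QU*QW + PU - 1/4*t5*QW - 3/8*QU*QV - 1/2*t5*QV + t2
     in vector [vector [1/8*QU^2 - PW + 1/2*PV - 1/4*t5*QU - 1/6*t5^2, L12, L13],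
                vector [1/2*QV - 1/4*QW, 2*PW - 1/4*QU^2 + 1/2*t5*QU + 1/3*t5^2, L23],
                vector [t5 - 1/2*QU, 1/2*QV + 1/4*QW,
                        1/8*QU^2 - PW - 1/2*PV - 1/4*t5*QU - 1/6*t5^2]])"

definition Lpoly :: "complex \<Rightarrow> complex \<Rightarrow> complex \<Rightarrow> complex \<Rightarrow> complex \<Rightarrow> complex \<Rightarrow> complex
    \<Rightarrow> complex \<Rightarrow> complex \<Rightarrow> complex fls \<Rightarrow> complex fls^3^3" where
  "Lpoly t5 t2 x QU QV QW PU PV PW lam =
     (\<chi> i j. lam^2 * fls_const (E13 $ i $ j) + lam * fls_const (L1 t5 QU QV $ i $ j)
             + fls_const (L0 t5 t2 x QU QV QW PU PV PW $ i $ j))"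

definition Mmat :: "complex^3^3" where
  "Mmat = vector [vector [1, omega, omega^2], vector [1,1,1], vector [1, omega^2, omega]]"

definition gmat :: "complex fls^3^3" where
  "gmat = sm (fls_const (\<i> / of_real (sqrt 3))) (diag3 xi 1 (inverse xi) ** cmat Mmat)"

definition Lcal :: "complex \<Rightarrow> complex \<Rightarrow> complex \<Rightarrow> complex \<Rightarrow> complex \<Rightarrow> complex \<Rightarrow> complex
    \<Rightarrow> complex \<Rightarrow> complex \<Rightarrow> complex fls^3^3" where
  "Lcal t5 t2 x QU QV QW PU PV PW =
     sm (fls_const 3 * xi^2) (matrix_inv gmat ** Lpoly t5 t2 x QU QV QW PU PV PW (xi^3) ** gmat)
     - matrix_inv gmat ** mdxi gmat"

definition theta :: "nat \<Rightarrow> complex \<Rightarrow> complex \<Rightarrow> complex \<Rightarrow> complex \<Rightarrow> complex" where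
  "theta j t5 t2 x z = 3/7 * omega^(j-1) * z^7 + inverse omega^(j-1) * t5 * z^5
                       + inverse omega^(j-1) * t2 * z^2 + omega^(j-1) * x * z"

definition theta_fls :: "nat \<Rightarrow> complex \<Rightarrow> complex \<Rightarrow> complex \<Rightarrow> complex fls" where
  "theta_fls j t5 t2 x = fls_const (3/7 * omega^(j-1)) * xi^7 + fls_const (inverse omega^(j-1) * t5) * xi^5
                       + fls_const (inverse omega^(j-1) * t2) * xi^2 + fls_const (omega^(j-1) * x) * xi"

definition dTheta :: "complex \<Rightarrow> complex \<Rightarrow> complex \<Rightarrow> complex fls^3^3" where
  "dTheta t5 t2 x = diag3 (dxi (theta_fls 1 t5 t2 x)) (dxi (theta_fls 2 t5 t2 x)) (dxi (theta_fls 3 t5 t2 x))"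

definition expTheta :: "complex \<Rightarrow> complex \<Rightarrow> complex \<Rightarrow> complex \<Rightarrow> complex^3^3" where
  "expTheta t5 t2 x z = diag3 (exp (theta 1 t5 t2 x z)) (exp (theta 2 t5 t2 x z)) (exp (theta 3 t5 t2 x z))"

definition Yser :: "(nat \<Rightarrow> complex^3^3) \<Rightarrow> complex fls^3^3" where
  "Yser Phi = (\<chi> i j. fps_to_fls (Abs_fps (\<lambda>k. Phi k $ i $ j)))"

text \<open>Phi = Y e^Theta is a formal solution of Phi' = L Phi iff Y' + Y Theta' = L Y\<close>
definition formal_solution ::
  "complex \<Rightarrow> complex \<Rightarrow> complex \<Rightarrow> complex \<Rightarrow> complex \<Rightarrow> complex \<Rightarrow> complex
    \<Rightarrow> complex \<Rightarrow> complex \<Rightarrow> (nat \<Rightarrow> complex^3^3) \<Rightarrow> bool" where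
  "formal_solution t5 t2 x QU QV QW PU PV PW Phi \<longleftrightarrow>
     Phi 0 = mat 1 \<and>
     mdxi (Yser Phi) + Yser Phi ** dTheta t5 t2 x = Lcal t5 t2 x QU QV QW PU PV PW ** Yser Phi"

end

theory Submission
  imports Defs
begin

(* Substituting xi by omega xi permutes the exponents cyclically, theta_j(omega xi) = theta_(j+1)(xi),
   leaves xi^3 and hence L(xi^3) unchanged, and turns the gauge g(xi) into g(xi) S^T.  Consequently
   the dilated and conjugated series S^T Y(omega xi) S solves the same equation Y' + Y Theta' = Lcal Y
   as Y, and it is again normalised.  A normalised formal solution is unique, because the leading
   terms 3 omega^(j-1) xi^6 of the theta_j' are pairwise distinct: the quotient C of two solutions
   satisfies C' = Theta' C - C Theta', which forces C to be constant and diagonal, hence the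
   identity.  Comparing the coefficients of xi^(-k) in Y = S^T Y(omega xi) S gives
   Phi_k = omega^(-k) S^T Phi_k S. *)

lemma omega_eq_Complex: "omega = Complex (-1/2) (sqrt 3 / 2)"
proof -
  have "omega = cis (pi - pi/3)"
    unfolding omega_def cis_conv_exp by (simp add: field_simps)
  then show ?thesis
    by (simp only: cis.ctr cos_pi_minus sin_pi_minus cos_60 sin_60) simp
qed

lemma omega_squared_eq_Complex: "omega^2 = Complex (-1/2) (- sqrt 3 / 2)"
  unfolding omega_eq_Complex power2_eq_square by (simp add: complex_eq_iff)

lemma omega_cube [simp]: "omega ^ 3 = 1"
  unfolding power3_eq_cube omega_squared_eq_Complex[unfolded power2_eq_square]
  by (simp add: omega_eq_Complex complex_eq_iff)

lemma omega_nonzero [simp]: "omega \<noteq> 0"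
  by (simp add: omega_eq_Complex complex_eq_iff)

lemma inverse_omega_nonzero: "inverse omega \<noteq> 0"
  by simp

lemma inverse_omega: "inverse omega = omega^2"
  using omega_cube omega_nonzero by (simp add: field_simps power3_eq_cube power2_eq_square)

lemma omega_power_mod_3: "omega ^ n = omega ^ (n mod 3)"
proof -
  have "omega ^ n = (omega ^ 3) ^ (n div 3) * omega ^ (n mod 3)"
    by (simp only: power_mult [symmetric] power_add [symmetric] mult_div_mod_eq)
  then show ?thesis by simp
qed

lemma omega_powers_distinct: "omega \<noteq> 1" "omega^2 \<noteq> 1" "omega^2 \<noteq> omega"
  unfolding omega_squared_eq_Complex by (simp_all add: omega_eq_Complex complex_eq_iff)

section \<open>Dilation and differentiation of formal Laurent series\<close>

(* fls_dilate c f is f(c z).  As z = 1/xi, fls_dilate (inverse omega) substitutes omega xi for xi. *)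
lift_definition fls_dilate :: "'a::field \<Rightarrow> 'a fls \<Rightarrow> 'a fls"
  is "\<lambda>c f n. c powi n * f n"
  by (auto elim: eventually_mono)

lemma fls_nth_dilate [simp]: "fls_nth (fls_dilate c f) n = c powi n * fls_nth f n"
  by transfer simp

lemma fls_dilate_add [simp]: "fls_dilate c (f + g) = fls_dilate c f + fls_dilate c g"
  by (rule fls_eqI) (simp add: algebra_simps)

lemma fls_dilate_diff [simp]: "fls_dilate c (f - g) = fls_dilate c f - fls_dilate c g"
  by (rule fls_eqI) (simp add: algebra_simps)

lemma fls_dilate_const [simp]: "fls_dilate c (fls_const a) = fls_const a"
  by (rule fls_eqI) simp

lemma fls_dilate_0 [simp]: "fls_dilate c 0 = 0"
  by (rule fls_eqI) simp

lemma fls_dilate_1 [simp]: "fls_dilate c 1 = 1"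
  by (rule fls_eqI) simp

lemma fls_dilate_numeral [simp]: "fls_dilate c (numeral k) = numeral k"
  using fls_dilate_const[of c "numeral k"] by simp

lemma fls_subdegree_dilate [simp]:
  assumes "c \<noteq> 0"
  shows "fls_subdegree (fls_dilate c f) = fls_subdegree f"
proof (cases "f = 0")
  case False
  then show ?thesis
    using assms by (intro fls_subdegree_eqI) auto
qed simp

lemma fls_dilate_mult [simp]:
  assumes "c \<noteq> 0"
  shows "fls_dilate c (f * g) = fls_dilate c f * fls_dilate c g"
proof (rule fls_eqI)
  fix n
  have "c powi n = c powi i * c powi (n - i)" for i
    using assms by (simp flip: power_int_add)
  then show "fls_nth (fls_dilate c (f * g)) n = fls_nth (fls_dilate c f * fls_dilate c g) n"
    using assms by (simp add: fls_times_nth(2) sum_distrib_left mult_ac)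
qed

lemma fls_dilate_power [simp]: "c \<noteq> 0 \<Longrightarrow> fls_dilate c (f ^ n) = fls_dilate c f ^ n"
  by (induction n) simp_all

lemma fls_dilate_inverse [simp]:
  assumes "c \<noteq> 0"
  shows "fls_dilate c (inverse f) = inverse (fls_dilate c f)"
proof (cases "f = 0")
  case False
  then have "fls_dilate c f * fls_dilate c (inverse f) = 1"
    using assms by (simp flip: fls_dilate_mult)
  then show ?thesis
    by (metis inverse_unique)
qed simp

lemma fls_dilate_xi: "fls_dilate c xi = fls_const (inverse c) * xi"
  by (rule fls_eqI) (simp add: xi_def)

lemma fls_dilate_const_xi_power:
  assumes "c \<noteq> 0"
  shows "fls_dilate c (fls_const a * xi ^ k) = fls_const (a * inverse c ^ k) * xi ^ k"
  using assms
  by (simp add: fls_dilate_xi power_mult_distrib mult_ac flip: fls_const_power fls_const_mult_const)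

lemma fls_nth_dxi: "fls_nth (dxi f) n = - (of_int (n - 1) * fls_nth f (n - 1))"
  unfolding dxi_def by (simp add: fls_X_power_times_conv_shift algebra_simps)

lemma dxi_add [simp]: "dxi (f + g) = dxi f + dxi g"
  unfolding dxi_def by (simp add: algebra_simps)

lemma dxi_diff [simp]: "dxi (f - g) = dxi f - dxi g"
  unfolding dxi_def by (simp add: algebra_simps)

lemma dxi_const [simp]: "dxi (fls_const c) = 0"
  unfolding dxi_def by simp

lemma dxi_0 [simp]: "dxi 0 = 0"
  unfolding dxi_def by simp

lemma dxi_mult [simp]: "dxi (f * g) = dxi f * g + f * dxi g"
  unfolding dxi_def by (simp add: algebra_simps)

lemma fls_dilate_dxi:
  assumes "c \<noteq> 0"
  shows "fls_dilate c (dxi f) = fls_const c * dxi (fls_dilate c f)"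
proof (rule fls_eqI)
  fix n
  have "c powi n = c * c powi (n - 1)"
    using assms power_int_add[of c 1 "n - 1"] by simp
  then show "fls_nth (fls_dilate c (dxi f)) n = fls_nth (fls_const c * dxi (fls_dilate c f)) n"
    by (simp add: fls_nth_dxi)
qed

lemma dxi_eq_0_imp_const:
  assumes "dxi f = 0"
  shows "f = fls_const (fls_nth f 0)"
proof (rule fls_eqI)
  fix n
  have "fls_nth (dxi f) (n + 1) = 0"
    using assms by simp
  then show "fls_nth f n = fls_nth (fls_const (fls_nth f 0)) n"
    by (auto simp: fls_nth_dxi)
qed

(* h * f has a nonzero coefficient at or below the subdegree of f, where dxi f has none. *)
lemma dxi_eq_mult_imp_zero:
  assumes "h \<noteq> 0" "fls_subdegree h \<le> 0" and "dxi f = h * f"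
  shows "f = 0"
proof (rule ccontr)
  assume "f \<noteq> 0"
  define n where "n = fls_subdegree h + fls_subdegree f"
  have "fls_nth (h * f) n \<noteq> 0"
    using \<open>f \<noteq> 0\<close> assms(1) nth_fls_subdegree_nonzero[of "h * f"] by (simp add: n_def)
  moreover have "fls_nth (dxi f) n = 0"
    using assms(2) by (simp add: fls_nth_dxi n_def)
  ultimately show False
    using assms(3) by simp
qed

lemma map_matrix_add:
  assumes "\<And>a b. f (a + b) = f a + f b"
  shows "map_matrix f (A + B) = map_matrix f A + map_matrix f B"
  using assms by (simp add: vec_eq_iff)

lemma map_matrix_diff:
  assumes "\<And>a b. f (a - b) = f a - f b"
  shows "map_matrix f (A - B) = map_matrix f A - map_matrix f B"
  using assms by (simp add: vec_eq_iff)

lemma map_matrix_mat: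
  assumes "f 0 = 0"
  shows "map_matrix f (mat c) = mat (f c)"
  using assms by (simp add: vec_eq_iff mat_def)

lemma map_matrix_mult:
  fixes f :: "'a::semiring_1 \<Rightarrow> 'b::semiring_1" and A :: "'a^'n^'m" and B :: "'a^'p^'n"
  assumes "\<And>a b. f (a + b) = f a + f b" "f 0 = 0" "\<And>a b. f (a * b) = f a * f b"
  shows "map_matrix f (A ** B) = map_matrix f A ** map_matrix f B"
proof -
  have "f (sum g S) = (\<Sum>k\<in>S. f (g k))" for g and S :: "'n set"
    using sum_comp_morphism[of f g S] assms(1,2) by (simp add: o_def)
  then show ?thesis
    by (simp add: vec_eq_iff matrix_matrix_mult_def assms(3))
qed

lemma map_matrix_mult_derivation:
  fixes D :: "'a::semiring_1 \<Rightarrow> 'a" and A :: "'a^'n^'m" and B :: "'a^'p^'n"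
  assumes "\<And>a b. D (a + b) = D a + D b" "D 0 = 0" "\<And>a b. D (a * b) = D a * b + a * D b"
  shows "map_matrix D (A ** B) = map_matrix D A ** B + A ** map_matrix D B"
proof -
  have "D (sum g S) = (\<Sum>k\<in>S. D (g k))" for g and S :: "'n set"
    using sum_comp_morphism[of D g S] assms(1,2) by (simp add: o_def)
  then show ?thesis
    by (simp add: vec_eq_iff matrix_matrix_mult_def assms(3) sum.distrib)
qed

lemma matrix_add_rdistrib: "(A + B) ** C = A ** C + B ** C"
  by (simp add: vec_eq_iff matrix_matrix_mult_def distrib_right sum.distrib)

lemma matrix_diff_ldistrib: "A ** (B - C) = A ** B - A ** (C :: 'a::ring_1^'n^'m)"
  by (simp add: vec_eq_iff matrix_matrix_mult_def right_diff_distrib sum_subtractf)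

lemma matrix_diff_rdistrib: "(A - B) ** C = A ** C - B ** (C :: 'a::ring_1^'n^'m)"
  by (simp add: vec_eq_iff matrix_matrix_mult_def left_diff_distrib sum_subtractf)

lemma matrix_mult_scale:
  fixes c :: "'a::comm_semiring_1"
  shows "P ** (\<chi> i j. c * A $ i $ j) ** R = (\<chi> i j. c * (P ** A ** R) $ i $ j)"
  by (simp add: vec_eq_iff matrix_matrix_mult_def sum_distrib_left sum_distrib_right mult_ac)

lemma diagonal_matrix_mult:
  fixes D A :: "'a::semiring_1^'n^'n"
  assumes "\<And>i j. i \<noteq> j \<Longrightarrow> D $ i $ j = 0"
  shows "(D ** A) $ i $ j = D $ i $ i * A $ i $ j"
    and "(A ** D) $ i $ j = A $ i $ j * D $ j $ j"
proof -
  have "(\<Sum>k\<in>UNIV. D $ i $ k * A $ k $ j) = (\<Sum>k\<in>{i}. D $ i $ k * A $ k $ j)"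
    by (rule sum.mono_neutral_right) (auto simp: assms)
  then show "(D ** A) $ i $ j = D $ i $ i * A $ i $ j"
    by (simp add: matrix_matrix_mult_def)
  have "(\<Sum>k\<in>UNIV. A $ i $ k * D $ k $ j) = (\<Sum>k\<in>{j}. A $ i $ k * D $ k $ j)"
    by (rule sum.mono_neutral_right) (auto simp: assms)
  then show "(A ** D) $ i $ j = A $ i $ j * D $ j $ j"
    by (simp add: matrix_matrix_mult_def)
qed

lemma matrix_inv_eqI:
  fixes A B :: "'a::field^'n^'n"
  assumes "A ** B = mat 1"
  shows "matrix_inv A = B"
  unfolding matrix_inv_def
proof (rule some_equality)
  show "A ** B = mat 1 \<and> B ** A = mat 1"
    using assms matrix_left_right_inverse by blast
next
  fix B' assume "A ** B' = mat 1 \<and> B' ** A = mat 1"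
  then show "B' = B"
    by (metis assms matrix_mul_assoc matrix_mul_lid matrix_mul_rid)
qed

lemma matrix_mult_matrix_inv:
  fixes A :: "'a::field^'n^'n"
  assumes "invertible A"
  shows "A ** matrix_inv A = mat 1"
  using assms matrix_inv_eqI unfolding invertible_def by metis

lemma mdxi_eq_map_matrix: "mdxi A = map_matrix dxi A"
  by (simp add: mdxi_def map_matrix_def)

lemma cmat_eq_map_matrix: "cmat A = map_matrix fls_const A"
  by (simp add: cmat_def map_matrix_def)

lemma mdxi_mult: "mdxi (A ** B) = mdxi A ** B + A ** mdxi B"
  unfolding mdxi_eq_map_matrix by (rule map_matrix_mult_derivation) simp_all

lemma mdxi_cmat [simp]: "mdxi (cmat A) = 0"
  by (simp add: mdxi_eq_map_matrix cmat_eq_map_matrix vec_eq_iff)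

lemma cmat_mult: "cmat (A ** B) = cmat A ** cmat B"
  unfolding cmat_eq_map_matrix by (rule map_matrix_mult) (simp_all add: fls_plus_const)

lemma cmat_mat: "cmat (mat c) = mat (fls_const c)"
  unfolding cmat_eq_map_matrix by (rule map_matrix_mat) simp

lemma invertible_cmat:
  assumes "invertible A"
  shows "invertible (cmat A)"
proof -
  from assms obtain B where "A ** B = mat 1" "B ** A = mat 1"
    unfolding invertible_def by blast
  then have "cmat A ** cmat B = mat 1" "cmat B ** cmat A = mat 1"
    by (simp_all add: cmat_mat flip: cmat_mult)
  then show ?thesis
    unfolding invertible_def by blast
qed

lemma sm_mult_left [simp]: "sm s A ** B = sm s (A ** B)"
  by (simp add: sm_def vec_eq_iff matrix_matrix_mult_def sum_distrib_left mult.assoc)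

lemma sm_mult_right [simp]: "A ** sm s B = sm s (A ** B)"
  by (simp add: sm_def vec_eq_iff matrix_matrix_mult_def sum_distrib_left mult.left_commute)

lemma sm_sm [simp]: "sm s (sm t A) = sm (s * t) A"
  by (simp add: sm_def vec_eq_iff mult.assoc)

lemma sm_1 [simp]: "sm 1 A = A"
  by (simp add: sm_def vec_eq_iff)

lemma sm_add: "sm s (A + B) = sm s A + sm s B"
  by (simp add: sm_def vec_eq_iff distrib_left)

lemma sm_diff: "sm s (A - B) = sm s A - sm s B"
  by (simp add: sm_def vec_eq_iff right_diff_distrib)

lemma sm_const_cancel:
  assumes "c \<noteq> 0" and "sm (fls_const c) A = sm (fls_const c) B"
  shows "A = B"
proof -
  have "sm (fls_const (inverse c)) (sm (fls_const c) A)
      = sm (fls_const (inverse c)) (sm (fls_const c) B)"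
    using assms(2) by simp
  then show ?thesis
    using assms(1) by simp
qed

lemma invertible_sm:
  assumes "s \<noteq> 0" and "invertible A"
  shows "invertible (sm s A)"
proof -
  from assms(2) obtain B where "A ** B = mat 1" "B ** A = mat 1"
    unfolding invertible_def by blast
  then have "sm s A ** sm (inverse s) B = mat 1" "sm (inverse s) B ** sm s A = mat 1"
    using assms(1) by (simp_all add: mult.commute)
  then show ?thesis
    unfolding invertible_def by blast
qed

abbreviation mat_dilate :: "'a::field \<Rightarrow> 'a fls^'n^'m \<Rightarrow> 'a fls^'n^'m" where
  "mat_dilate c \<equiv> map_matrix (fls_dilate c)"

lemma mat_dilate_mult: "c \<noteq> 0 \<Longrightarrow> mat_dilate c (A ** B) = mat_dilate c A ** mat_dilate c B"
  by (rule map_matrix_mult) simp_all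

lemma mat_dilate_add: "mat_dilate c (A + B) = mat_dilate c A + mat_dilate c B"
  by (rule map_matrix_add) simp

lemma mat_dilate_diff: "mat_dilate c (A - B) = mat_dilate c A - mat_dilate c B"
  by (rule map_matrix_diff) simp

lemma mat_dilate_mat: "mat_dilate c (mat a) = mat (fls_dilate c a)"
  by (rule map_matrix_mat) simp

lemma mat_dilate_cmat [simp]: "mat_dilate c (cmat A) = cmat A"
  by (simp add: cmat_eq_map_matrix vec_eq_iff)

lemma mat_dilate_sm: "c \<noteq> 0 \<Longrightarrow> mat_dilate c (sm s A) = sm (fls_dilate c s) (mat_dilate c A)"
  by (simp add: sm_def vec_eq_iff)

lemma mat_dilate_mdxi: "c \<noteq> 0 \<Longrightarrow> mat_dilate c (mdxi A) = sm (fls_const c) (mdxi (mat_dilate c A))"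
  by (simp add: mdxi_def sm_def vec_eq_iff fls_dilate_dxi)

lemmas matrix3_simps = vec_eq_iff forall_3 matrix_matrix_mult_def sum_3 transpose_def

lemma map_matrix_diag3: "f 0 = 0 \<Longrightarrow> map_matrix f (diag3 a b c) = diag3 (f a) (f b) (f c)"
  by (simp add: vec_eq_iff forall_3 diag3_def)

lemma sm_diag3: "sm s (diag3 a b c) = diag3 (s * a) (s * b) (s * c)"
  by (simp add: sm_def vec_eq_iff forall_3 diag3_def)

lemma Smat_transpose_mult: "Smat ** transpose Smat = mat 1" "transpose Smat ** Smat = mat 1"
  by (simp_all add: matrix3_simps Smat_def mat_def)

lemma cmat_Smat_transpose_mult:
  "cmat Smat ** cmat (transpose Smat) = mat 1" "cmat (transpose Smat) ** cmat Smat = mat 1"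
  by (simp_all add: Smat_transpose_mult cmat_mat flip: cmat_mult)

lemma Smat_conj_diag3: "transpose Smat ** diag3 a b c ** Smat = diag3 c a b"
  by (simp add: matrix3_simps Smat_def diag3_def)

lemma cmat_Smat_conj_diag3:
  "cmat (transpose Smat) ** diag3 a b c ** cmat Smat = diag3 c a b"
  "cmat Smat ** diag3 a b c ** cmat (transpose Smat) = diag3 b c a"
  by (simp_all add: matrix3_simps Smat_def diag3_def cmat_def)

section \<open>Symmetry and uniqueness of formal solutions\<close>

lemma formal_equation_dilate_conj:
  fixes Y L D :: "complex fls^3^3" and P Q :: "complex^3^3"
  assumes "c \<noteq> 0" and PQ: "P ** Q = mat 1" "Q ** P = mat 1"
    and L: "mat_dilate c L = sm (fls_const c) (cmat Q ** L ** cmat P)"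
    and D: "mat_dilate c D = sm (fls_const c) (cmat Q ** D ** cmat P)"
    and Y: "mdxi Y + Y ** D = L ** Y"
  defines "Y' \<equiv> cmat P ** mat_dilate c Y ** cmat Q"
  shows "mdxi Y' + Y' ** D = L ** Y'"
proof -
  define Z where "Z = mat_dilate c Y"
  have cmat_PQ: "cmat P ** cmat Q = mat 1" "cmat Q ** cmat P = mat 1"
    by (simp_all add: PQ cmat_mat flip: cmat_mult)
  then have PQ_cancel: "X ** cmat P ** cmat Q = X" "X ** cmat Q ** cmat P = X" for X
    by (simp_all flip: matrix_mul_assoc)
  have "mat_dilate c (mdxi Y + Y ** D) = mat_dilate c (L ** Y)"
    using Y by simp
  then have "sm (fls_const c) (mdxi Z + Z ** cmat Q ** D ** cmat P)
      = sm (fls_const c) (cmat Q ** L ** cmat P ** Z)"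
    using \<open>c \<noteq> 0\<close>
    by (simp add: Z_def mat_dilate_add mat_dilate_mult mat_dilate_mdxi L D sm_add matrix_mul_assoc)
  then have "mdxi Z + Z ** cmat Q ** D ** cmat P = cmat Q ** L ** cmat P ** Z"
    using \<open>c \<noteq> 0\<close> by (rule sm_const_cancel[rotated])
  then have "cmat P ** (mdxi Z + Z ** cmat Q ** D ** cmat P) ** cmat Q
      = cmat P ** (cmat Q ** L ** cmat P ** Z) ** cmat Q"
    by simp
  then show ?thesis
    unfolding Y'_def Z_def[symmetric]
    by (simp add: matrix_add_ldistrib matrix_add_rdistrib mdxi_mult matrix_mul_assoc cmat_PQ PQ_cancel)
qed

(* The quotient C of the two solutions satisfies C' = D C - C D, so its off-diagonal entries vanish
   by dxi_eq_mult_imp_zero and its diagonal entries are constants, fixed to 1 by the normalisation. *)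
lemma formal_equation_solution_unique:
  fixes Y1 Y2 L D :: "complex fls^3^3"
  assumes D_diagonal: "\<And>i j. i \<noteq> j \<Longrightarrow> D $ i $ j = 0"
    and D_distinct: "\<And>i j. i \<noteq> j \<Longrightarrow> \<exists>n\<le>0. fls_nth (D $ i $ i) n \<noteq> fls_nth (D $ j $ j) n"
    and Y1: "mdxi Y1 + Y1 ** D = L ** Y1" and Y2: "mdxi Y2 + Y2 ** D = L ** Y2"
    and "invertible Y2"
    and Y1_norm: "\<And>i. fls_nth (Y1 $ i $ i) 0 = 1" and Y2_norm: "\<And>i. fls_nth (Y2 $ i $ i) 0 = 1"
  shows "Y1 = Y2"
proof -
  define C where "C = matrix_inv Y2 ** Y1"
  have Y2_inv: "Y2 ** matrix_inv Y2 = mat 1" "matrix_inv Y2 ** Y2 = mat 1"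
    using matrix_mult_matrix_inv[OF \<open>invertible Y2\<close>] matrix_left_right_inverse by blast+
  have Y1_eq: "Y1 = Y2 ** C"
    by (simp add: C_def matrix_mul_assoc Y2_inv)
  have dY1: "mdxi Y1 = L ** Y2 ** C - Y2 ** C ** D" and dY2: "mdxi Y2 = L ** Y2 - Y2 ** D"
    using Y1 Y2 by (simp_all add: Y1_eq matrix_mul_assoc eq_diff_eq)
  have "Y2 ** mdxi C = mdxi Y1 - mdxi Y2 ** C"
    by (simp add: Y1_eq mdxi_mult)
  also have "\<dots> = (L ** Y2 ** C - Y2 ** C ** D) - (L ** Y2 - Y2 ** D) ** C"
    unfolding dY1 dY2 ..
  also have "\<dots> = Y2 ** (D ** C - C ** D)"
    by (simp add: matrix_diff_ldistrib matrix_diff_rdistrib matrix_mul_assoc)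
  finally have "matrix_inv Y2 ** (Y2 ** mdxi C) = matrix_inv Y2 ** (Y2 ** (D ** C - C ** D))"
    by simp
  then have "mdxi C = D ** C - C ** D"
    by (simp add: matrix_mul_assoc Y2_inv)
  then have "mdxi C $ i $ j = (D ** C - C ** D) $ i $ j" for i j
    by simp
  then have C_eq: "dxi (C $ i $ j) = (D $ i $ i - D $ j $ j) * C $ i $ j" for i j
    by (simp add: mdxi_def diagonal_matrix_mult[OF D_diagonal] algebra_simps)
  have C_offdiag: "C $ i $ j = 0" if "i \<noteq> j" for i j
  proof -
    from D_distinct[OF \<open>i \<noteq> j\<close>]
    obtain n where "n \<le> 0" and n: "fls_nth (D $ i $ i - D $ j $ j) n \<noteq> 0"
      by auto
    have "fls_subdegree (D $ i $ i - D $ j $ j) \<le> 0"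
      using fls_subdegree_leI[OF n] \<open>n \<le> 0\<close> by simp
    then show ?thesis
      using dxi_eq_mult_imp_zero[OF fls_nonzeroI[OF n] _ C_eq] by simp
  qed
  have C_diag: "C $ i $ i = 1" for i
  proof -
    define c where "c = fls_nth (C $ i $ i) 0"
    have "dxi (C $ i $ i) = 0"
      using C_eq[of i i] by simp
    then have C_const: "C $ i $ i = fls_const c"
      unfolding c_def by (rule dxi_eq_0_imp_const)
    have "Y1 $ i $ i = Y2 $ i $ i * fls_const c"
      using Y1_eq diagonal_matrix_mult(2)[of C Y2] C_offdiag C_const by simp
    then have "c = 1"
      using Y1_norm[of i] Y2_norm[of i] by simp
    then show ?thesis
      by (simp add: C_const)
  qed
  have "C = mat 1"
    using C_offdiag C_diag by (simp add: vec_eq_iff mat_def)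
  then show ?thesis
    by (simp add: Y1_eq)
qed

section \<open>The exponent, the gauge and the Lax matrix under rotation\<close>

lemma theta_rotate:
  "theta 1 t5 t2 x (omega * z) = theta 2 t5 t2 x z"
  "theta 2 t5 t2 x (omega * z) = theta 3 t5 t2 x z"
  "theta 3 t5 t2 x (omega * z) = theta 1 t5 t2 x z"
  using omega_cube unfolding theta_def inverse_omega by (simp_all add: power_mult_distrib; algebra)+

lemma expTheta_rotate:
  "transpose Smat ** expTheta t5 t2 x (omega * z) ** Smat = expTheta t5 t2 x z"
  unfolding expTheta_def Smat_conj_diag3 theta_rotate ..

lemma theta_fls_dilate:
  "fls_dilate (inverse omega) (theta_fls (Suc j) t5 t2 x) = theta_fls (Suc (Suc j)) t5 t2 x"
proof -
  have xi: "fls_dilate (inverse omega) (fls_const a * xi) = fls_const (a * omega) * xi" for a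
    using fls_dilate_const_xi_power[OF inverse_omega_nonzero, of a 1] by simp
  have "omega ^ 7 = omega" "omega ^ 5 = inverse omega" "omega ^ 2 = inverse omega"
    by (subst omega_power_mod_3; simp add: inverse_omega)+
  then show ?thesis
    unfolding theta_fls_def fls_dilate_add fls_dilate_const_xi_power[OF inverse_omega_nonzero] xi
    by (simp add: mult_ac)
qed

lemma theta_fls_periodic: "theta_fls (Suc (Suc (Suc (Suc j)))) t5 t2 x = theta_fls (Suc j) t5 t2 x"
proof -
  have "omega ^ Suc (Suc (Suc j)) = omega ^ 3 * omega ^ j"
    "inverse omega ^ Suc (Suc (Suc j)) = inverse omega ^ 3 * inverse omega ^ j"
    by (simp_all only: power_Suc power3_eq_cube mult.assoc)
  then have "omega ^ Suc (Suc (Suc j)) = omega ^ j" "inverse omega ^ Suc (Suc (Suc j)) = inverse omega ^ j"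
    by (simp_all add: power_inverse)
  then show ?thesis
    by (simp only: theta_fls_def diff_Suc_1)
qed

lemma theta_fls_rotate:
  "fls_dilate (inverse omega) (theta_fls 1 t5 t2 x) = theta_fls 2 t5 t2 x"
  "fls_dilate (inverse omega) (theta_fls 2 t5 t2 x) = theta_fls 3 t5 t2 x"
  "fls_dilate (inverse omega) (theta_fls 3 t5 t2 x) = theta_fls 1 t5 t2 x"
  unfolding One_nat_def numeral_2_eq_2 numeral_3_eq_3 theta_fls_dilate theta_fls_periodic
  by (rule refl)+

lemma dTheta_dilate:
  "mat_dilate (inverse omega) (dTheta t5 t2 x)
     = sm (fls_const (inverse omega)) (cmat Smat ** dTheta t5 t2 x ** cmat (transpose Smat))"
  unfolding dTheta_def map_matrix_diag3[of "fls_dilate (inverse omega)", OF fls_dilate_0]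
    fls_dilate_dxi[OF inverse_omega_nonzero] theta_fls_rotate
  by (simp add: cmat_Smat_conj_diag3 sm_diag3)

lemma fls_nth_dxi_theta_fls: "fls_nth (dxi (theta_fls j t5 t2 x)) (-6) = 3 * omega ^ (j - 1)"
  by (simp add: fls_nth_dxi theta_fls_def xi_def)

lemma dTheta_offdiag: "i \<noteq> j \<Longrightarrow> dTheta t5 t2 x $ i $ j = 0"
  using exhaust_3[of i] exhaust_3[of j] by (auto simp: dTheta_def diag3_def)

lemma dTheta_diag_leading_coeff_distinct:
  "i \<noteq> j \<Longrightarrow> fls_nth (dTheta t5 t2 x $ i $ i) (-6) \<noteq> fls_nth (dTheta t5 t2 x $ j $ j) (-6)"
  using exhaust_3[of i] exhaust_3[of j] omega_powers_distinct
  by (auto simp: dTheta_def diag3_def fls_nth_dxi_theta_fls)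

lemma Mmat_rotate: "diag3 omega 1 (inverse omega) ** Mmat = Mmat ** transpose Smat"
  using omega_cube
  by (simp add: matrix3_simps Mmat_def Smat_def diag3_def inverse_omega power2_eq_square power3_eq_cube
      mult.assoc)

lemma det_Mmat: "det Mmat = 3 * (omega - omega ^ 2)"
  using omega_cube by (simp add: det_3 Mmat_def; algebra)

lemma invertible_gmat: "invertible gmat"
proof -
  have "det Mmat \<noteq> 0"
    using omega_powers_distinct(3) by (simp add: det_Mmat)
  then have "invertible (cmat Mmat)"
    by (simp add: invertible_det_nz[symmetric] invertible_cmat)
  moreover have "invertible (diag3 xi 1 (inverse xi))"
    unfolding invertible_def
    by (rule exI[of _ "diag3 (inverse xi) 1 xi"]) (simp add: matrix3_simps diag3_def mat_def xi_def)
  ultimately show ?thesis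
    unfolding gmat_def by (intro invertible_sm invertible_mult) simp_all
qed

lemma gmat_dilate: "mat_dilate (inverse omega) gmat = gmat ** cmat (transpose Smat)"
proof -
  let ?c = "fls_const (\<i> / of_real (sqrt 3))" and ?X = "diag3 xi 1 (inverse xi)"
  have "mat_dilate (inverse omega) ?X = ?X ** cmat (diag3 omega 1 (inverse omega))"
    by (simp add: map_matrix_diag3 fls_dilate_xi matrix3_simps diag3_def cmat_def fls_inverse_const mult_ac)
  then have "mat_dilate (inverse omega) gmat
      = sm ?c (?X ** (cmat (diag3 omega 1 (inverse omega)) ** cmat Mmat))"
    by (simp add: gmat_def mat_dilate_sm mat_dilate_mult matrix_mul_assoc)
  also have "cmat (diag3 omega 1 (inverse omega)) ** cmat Mmat = cmat Mmat ** cmat (transpose Smat)"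
    by (simp add: Mmat_rotate flip: cmat_mult)
  also have "sm ?c (?X ** (cmat Mmat ** cmat (transpose Smat))) = gmat ** cmat (transpose Smat)"
    by (simp add: gmat_def matrix_mul_assoc)
  finally show ?thesis .
qed

lemma matrix_inv_gmat_dilate:
  "mat_dilate (inverse omega) (matrix_inv gmat) = cmat Smat ** matrix_inv gmat"
proof -
  let ?gS = "gmat ** cmat (transpose Smat)"
  have "?gS ** mat_dilate (inverse omega) (matrix_inv gmat) = mat 1"
    by (simp add: gmat_dilate[symmetric] mat_dilate_mult[symmetric] matrix_mult_matrix_inv invertible_gmat
        mat_dilate_mat)
  then have inv_dilate: "matrix_inv ?gS = mat_dilate (inverse omega) (matrix_inv gmat)"
    by (rule matrix_inv_eqI)
  have "?gS ** (cmat Smat ** matrix_inv gmat)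
      = gmat ** (cmat (transpose Smat) ** cmat Smat) ** matrix_inv gmat"
    by (simp add: matrix_mul_assoc)
  then have "?gS ** (cmat Smat ** matrix_inv gmat) = mat 1"
    by (simp add: cmat_Smat_transpose_mult matrix_mult_matrix_inv invertible_gmat)
  then have "matrix_inv ?gS = cmat Smat ** matrix_inv gmat"
    by (rule matrix_inv_eqI)
  with inv_dilate show ?thesis
    by simp
qed

lemma Lpoly_dilate:
  "c \<noteq> 0 \<Longrightarrow>
    mat_dilate c (Lpoly t5 t2 x QU QV QW PU PV PW lam) = Lpoly t5 t2 x QU QV QW PU PV PW (fls_dilate c lam)"
  by (simp add: Lpoly_def vec_eq_iff)

lemma Lcal_dilate:
  "mat_dilate (inverse omega) (Lcal t5 t2 x QU QV QW PU PV PW)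
     = sm (fls_const (inverse omega)) (cmat Smat ** Lcal t5 t2 x QU QV QW PU PV PW ** cmat (transpose Smat))"
proof -
  have "fls_dilate (inverse omega) xi = fls_const omega * xi"
    by (simp add: fls_dilate_xi)
  then have "fls_dilate (inverse omega) xi ^ 2 = fls_const (inverse omega) * xi ^ 2"
    "fls_dilate (inverse omega) xi ^ 3 = xi ^ 3"
    by (simp_all add: power_mult_distrib inverse_omega flip: fls_const_power)
  then show ?thesis
    by (simp add: Lcal_def mat_dilate_diff mat_dilate_sm mat_dilate_mult mat_dilate_mdxi Lpoly_dilate
        matrix_inv_gmat_dilate gmat_dilate mdxi_mult sm_diff matrix_diff_ldistrib matrix_diff_rdistrib
        matrix_mul_assoc mult_ac)
qed

section \<open>Normalised formal solutions\<close>

lemma fls_nth_Yser: "fls_nth (Yser Q $ i $ j) n = (if n < 0 then 0 else Q (nat n) $ i $ j)"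
  by (simp add: Yser_def)

lemma Yser_inject: "Yser Q = Yser R \<Longrightarrow> Q = R"
  by (metis fls_nth_Yser nat_int of_nat_less_0_iff vec_eq_iff ext)

lemma mat_dilate_Yser: "mat_dilate c (Yser Q) = Yser (\<lambda>k. \<chi> i j. c ^ k * Q k $ i $ j)"
  by (simp add: vec_eq_iff fls_eq_iff fls_nth_Yser power_int_def)

lemma cmat_mult_Yser: "cmat A ** Yser Q = Yser (\<lambda>k. A ** Q k)"
  by (simp add: vec_eq_iff fls_eq_iff fls_nth_Yser matrix_matrix_mult_def cmat_def fls_nth_sum)

lemma Yser_mult_cmat: "Yser Q ** cmat A = Yser (\<lambda>k. Q k ** A)"
  by (simp add: vec_eq_iff fls_eq_iff fls_nth_Yser matrix_matrix_mult_def cmat_def fls_nth_sum)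

lemma invertible_Yser:
  assumes "Q 0 = mat 1"
  shows "invertible (Yser Q)"
proof -
  define F where "F i j = Abs_fps (\<lambda>k. Q k $ i $ j)" for i j
  have "det (Yser Q) = fps_to_fls
      (F 1 1 * F 2 2 * F 3 3 + F 1 2 * F 2 3 * F 3 1 + F 1 3 * F 2 1 * F 3 2
       - F 1 1 * F 2 3 * F 3 2 - F 1 2 * F 2 1 * F 3 3 - F 1 3 * F 2 2 * F 3 1)"
    unfolding det_3 by (simp only: Yser_def F_def vec_lambda_beta fls_times_fps_to_fls
        fps_to_fls_plus fps_to_fls_minus)
  also have "fls_nth \<dots> 0 = 1"
    by (simp add: F_def assms mat_def)
  finally have "det (Yser Q) \<noteq> 0"
    by (metis fls_zero_nth zero_neq_one)
  then show ?thesis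
    by (simp add: invertible_det_nz)
qed

lemma formal_solution_unique:
  assumes "formal_solution t5 t2 x QU QV QW PU PV PW Phi"
    and "formal_solution t5 t2 x QU QV QW PU PV PW Psi"
  shows "Phi = Psi"
proof -
  have separated: "\<exists>n\<le>0. fls_nth (dTheta t5 t2 x $ i $ i) n \<noteq> fls_nth (dTheta t5 t2 x $ j $ j) n"
    if "i \<noteq> j" for i j
    using dTheta_diag_leading_coeff_distinct[OF that] by (intro exI[of _ "-6"]) simp
  from assms have Phi_0: "Phi 0 = mat 1" and Psi_0: "Psi 0 = mat 1"
    and Phi_eq: "mdxi (Yser Phi) + Yser Phi ** dTheta t5 t2 x = Lcal t5 t2 x QU QV QW PU PV PW ** Yser Phi"
    and Psi_eq: "mdxi (Yser Psi) + Yser Psi ** dTheta t5 t2 x = Lcal t5 t2 x QU QV QW PU PV PW ** Yser Psi"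
    unfolding formal_solution_def by blast+
  have "Yser Phi = Yser Psi"
  proof (rule formal_equation_solution_unique[OF dTheta_offdiag separated Phi_eq Psi_eq])
    show "invertible (Yser Psi)"
      using Psi_0 by (rule invertible_Yser)
    show "fls_nth (Yser Phi $ i $ i) 0 = 1" "fls_nth (Yser Psi $ i $ i) 0 = 1" for i
      by (simp_all add: fls_nth_Yser Phi_0 Psi_0 mat_def)
  qed
  then show ?thesis
    by (rule Yser_inject)
qed

lemma formal_solution_rotate:
  assumes "formal_solution t5 t2 x QU QV QW PU PV PW Phi"
  shows "formal_solution t5 t2 x QU QV QW PU PV PW
           (\<lambda>k. \<chi> i j. inverse omega ^ k * (transpose Smat ** Phi k ** Smat) $ i $ j)"
    (is "formal_solution _ _ _ _ _ _ _ _ _ ?Phi'")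
proof -
  from assms have Phi_0: "Phi 0 = mat 1"
    and Phi_eq: "mdxi (Yser Phi) + Yser Phi ** dTheta t5 t2 x = Lcal t5 t2 x QU QV QW PU PV PW ** Yser Phi"
    unfolding formal_solution_def by blast+
  have "cmat (transpose Smat) ** mat_dilate (inverse omega) (Yser Phi) ** cmat Smat = Yser ?Phi'"
    by (simp add: mat_dilate_Yser cmat_mult_Yser Yser_mult_cmat matrix_mult_scale)
  then have "mdxi (Yser ?Phi') + Yser ?Phi' ** dTheta t5 t2 x = Lcal t5 t2 x QU QV QW PU PV PW ** Yser ?Phi'"
    using formal_equation_dilate_conj[OF inverse_omega_nonzero Smat_transpose_mult(2,1) Lcal_dilate
        dTheta_dilate Phi_eq]
    by simp
  moreover have "?Phi' 0 = mat 1"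
    using Phi_0 by (simp add: Smat_transpose_mult)
  ultimately show ?thesis
    unfolding formal_solution_def by blast
qed

theorem mainTheorem8:
  fixes t5 t2 x QU QV QW PU PV PW :: complex and Phi :: "nat \<Rightarrow> complex^3^3"
  assumes "formal_solution t5 t2 x QU QV QW PU PV PW Phi"
  shows "(\<forall>z. transpose Smat ** expTheta t5 t2 x (omega * z) ** Smat = expTheta t5 t2 x z)
         \<and> (\<forall>k. Phi k = (\<chi> i j. inverse omega ^ k * (transpose Smat ** Phi k ** Smat) $ i $ j))"
proof (intro conjI allI)
  show "transpose Smat ** expTheta t5 t2 x (omega * z) ** Smat = expTheta t5 t2 x z" for z
    by (rule expTheta_rotate)
  have "Phi = (\<lambda>k. \<chi> i j. inverse omega ^ k * (transpose Smat ** Phi k ** Smat) $ i $ j)"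
    using assms formal_solution_rotate[OF assms] by (rule formal_solution_unique)
  then show "Phi k = (\<chi> i j. inverse omega ^ k * (transpose Smat ** Phi k ** Smat) $ i $ j)" for k
    by (rule fun_cong)
qed

end
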